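(* Let $G$ be a countable directed graph, let $v_{1}\neq v_{2}$ be vertices of $G$, and let $x\in W^{*}(G)$ be a $D_{G}$-valued random variable with Fourier expansion $$ x=\sum_{l_{1}=v_{1}l_{1}v_{2}\in FP(G:x)}p_{l_{1}}L_{l_{1}}+\sum_{l_{2}=v_{2}l_{2}v_{1}\in FP(G:x)}p_{l_{2}}L_{l_{2}}^{*}. $$ Then for every $n\in\mathbb{N}$ and all $d_{1},\dots,d_{n}\in D_{G}$, the $n$-th $D_G$-valued moment $E(d_{1}x d_{2}x\cdots d_{n}x)$ and the $n$-th $D_G$-valued cumulant $k_{n}(d_{1}x,\dots,d_{n}x)$ of $x$ are both $0$.
   Context: $G$ is a countable directed graph with vertex set $V(G)$; $\mathbb{F}^{+}(G)$ is its free semigroupoid (all vertices and all admissible finite paths) and $FP(G)$ the set of finite paths; $w=xwy$ indicates that the path $w$ has source $x$ and range $y$. On $H_{G}=l^{2}(\mathbb{F}^{+}(G))$ with orthonormal basis $\{\xi_{w}\}$, $L_{w}\xi_{h}=\xi_{wh}$ if $wh\in\mathbb{F}^{+}(G)$ and $0$ otherwise; $L_{w}^{*}$ is the adjoint. $W^{*}(G)$ is the weak-operator closure of the $*$-algebra generated by all $L_{w},L_{w}^{*}$, and $D_{G}$ is the von Neumann subalgebra generated by the projections $L_{v}$, $v\in V(G)$. Each $a\in W^{*}(G)$ has a Fourier expansion $a=\sum_{w\in\mathbb{F}^{+}(G:a),u_{w}\in\{1,*\}}p_{w}L_{w}^{u_{w}}$ ($p_w\in\mathbb{C}$ nonzero)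 with support $\mathbb{F}^{+}(G:a)$, $V(G:a)=\mathbb{F}^{+}(G:a)\cap V(G)$, $FP(G:a)=\mathbb{F}^{+}(G:a)\cap FP(G)$. The conditional expectation $E:W^{*}(G)\to D_{G}$ is $E(a)=\sum_{v\in V(G:a)}p_{v}L_{v}$, making $(W^{*}(G),E)$ a $W^{*}$-probability space with amalgamation over $D_{G}$. The $n$-th $D_G$-valued moment of $a$ is $E(d_1a\cdots d_na)$ and the $n$-th $D_G$-valued cumulant $k_n(d_1a,\dots,d_na)$ is Speicher's operator-valued (amalgamated) free cumulant with respect to $E$, for $d_j\in D_G$. *)

theory Defs
  imports "HOL-Analysis.Analysis"
begin

text \<open>Vertex set = UNIV of the vertex type, edge set = UNIV of the edge type;
  countability is imposed by the sort countable in the main theorem.\<close>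
record ('v, 'e) dgraph =
  gsrc :: "'e \<Rightarrow> 'v"
  grng :: "'e \<Rightarrow> 'v"

text \<open>Elements of the free semigroupoid: vertices and finite paths (edge lists).\<close>
datatype ('v, 'e) fsg = Vx 'v | Pth "'e list"

definition FSG :: "('v, 'e) dgraph \<Rightarrow> ('v, 'e) fsg set" where
  "FSG G = {w. case w of Vx v \<Rightarrow> True
                | Pth es \<Rightarrow> es \<noteq> [] \<and>
                    (\<forall>i. i + 1 < length es \<longrightarrow> grng G (es ! i) = gsrc G (es ! (i + 1)))}"

text \<open>Paths w with w = x w y (source x, range y).\<close>
definition paths_from_to :: "('v, 'e) dgraph \<Rightarrow> 'v \<Rightarrow> 'v \<Rightarrow> ('v, 'e) fsg set" where
  "paths_from_to G x y = {Pth es | es. Pth es \<in> FSG G \<and> gsrc G (hd es) = x \<and> grng G (last es) = y}"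

text \<open>Partial product of the free semigroupoid (None = the product is not admissible).\<close>
fun fmult :: "('v, 'e) dgraph \<Rightarrow> ('v, 'e) fsg \<Rightarrow> ('v, 'e) fsg \<Rightarrow> ('v, 'e) fsg option" where
  "fmult G (Vx x) (Vx y) = (if x = y then Some (Vx x) else None)"
| "fmult G (Vx x) (Pth es) = (if gsrc G (hd es) = x then Some (Pth es) else None)"
| "fmult G (Pth es) (Vx y) = (if grng G (last es) = y then Some (Pth es) else None)"
| "fmult G (Pth es) (Pth fs) =
     (if grng G (last es) = gsrc G (hd fs) then Some (Pth (es @ fs)) else None)"

definition l2 :: "'a set \<Rightarrow> ('a \<Rightarrow> complex) set" where
  "l2 S = {f. (\<forall>k. k \<notin> S \<longrightarrow> f k = 0) \<and> (\<lambda>k. (cmod (f k))\<^sup>2) summable_on UNIV}"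

definition ip :: "('a \<Rightarrow> complex) \<Rightarrow> ('a \<Rightarrow> complex) \<Rightarrow> complex" where
  "ip f g = infsum (\<lambda>k. f k * cnj (g k)) UNIV"

definition vnorm :: "('a \<Rightarrow> complex) \<Rightarrow> real" where
  "vnorm f = sqrt (infsum (\<lambda>k. (cmod (f k))\<^sup>2) UNIV)"

definition HG :: "('v, 'e) dgraph \<Rightarrow> (('v, 'e) fsg \<Rightarrow> complex) set" where
  "HG G = l2 (FSG G)"

definition xi :: "'a \<Rightarrow> ('a \<Rightarrow> complex)" where
  "xi w = (\<lambda>k. if k = w then 1 else 0)"

type_synonym ('v, 'e) op = "(('v, 'e) fsg \<Rightarrow> complex) \<Rightarrow> (('v, 'e) fsg \<Rightarrow> complex)"

text \<open>Bounded operators on H_G, normalised to be 0 outside H_G.\<close>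
definition bounded_op :: "('v, 'e) dgraph \<Rightarrow> ('v, 'e) op \<Rightarrow> bool" where
  "bounded_op G A \<longleftrightarrow>
     (\<forall>f \<in> HG G. A f \<in> HG G) \<and> (\<forall>f. f \<notin> HG G \<longrightarrow> A f = (\<lambda>k. 0)) \<and>
     (\<forall>f \<in> HG G. \<forall>g \<in> HG G. \<forall>c. A (\<lambda>k. c * f k + g k) = (\<lambda>k. c * A f k + A g k)) \<and>
     (\<exists>K. \<forall>f \<in> HG G. vnorm (A f) \<le> K * vnorm f)"

definition op_adj :: "('v, 'e) dgraph \<Rightarrow> ('v, 'e) op \<Rightarrow> ('v, 'e) op" where
  "op_adj G A = (SOME B. bounded_op G B \<and> (\<forall>f \<in> HG G. \<forall>g \<in> HG G. ip (A f) g = ip f (B g)))"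

definition op_id :: "('v, 'e) dgraph \<Rightarrow> ('v, 'e) op" where
  "op_id G = (\<lambda>f. if f \<in> HG G then f else (\<lambda>k. 0))"

definition op_zero :: "('v, 'e) op" where
  "op_zero = (\<lambda>f k. 0)"

definition op_add :: "('v, 'e) op \<Rightarrow> ('v, 'e) op \<Rightarrow> ('v, 'e) op" where
  "op_add A B = (\<lambda>f k. A f k + B f k)"

definition op_diff :: "('v, 'e) op \<Rightarrow> ('v, 'e) op \<Rightarrow> ('v, 'e) op" where
  "op_diff A B = (\<lambda>f k. A f k - B f k)"

definition op_smult :: "complex \<Rightarrow> ('v, 'e) op \<Rightarrow> ('v, 'e) op" where
  "op_smult c A = (\<lambda>f k. c * A f k)"

definition op_sum :: "('i \<Rightarrow> ('v, 'e) op) \<Rightarrow> 'i set \<Rightarrow> ('v, 'e) op" where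
  "op_sum T I = (\<lambda>f k. \<Sum>i\<in>I. T i f k)"

text \<open>The creation operators: L_w xi_h = xi_{wh} if wh is defined, 0 otherwise.\<close>
definition L :: "('v, 'e) dgraph \<Rightarrow> ('v, 'e) fsg \<Rightarrow> ('v, 'e) op" where
  "L G w = (\<lambda>f. if f \<in> HG G then
              (\<lambda>k. if \<exists>h \<in> FSG G. fmult G w h = Some k
                   then f (THE h. h \<in> FSG G \<and> fmult G w h = Some k) else 0)
            else (\<lambda>k. 0))"

inductive_set star_alg :: "('v, 'e) dgraph \<Rightarrow> ('v, 'e) op set \<Rightarrow> ('v, 'e) op set"
  for G :: "('v, 'e) dgraph" and S :: "('v, 'e) op set" where
  base: "A \<in> S \<Longrightarrow> A \<in> star_alg G S"
| add: "A \<in> star_alg G S \<Longrightarrow> B \<in> star_alg G S \<Longrightarrow> op_add A B \<in> star_alg G S"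
| smult: "A \<in> star_alg G S \<Longrightarrow> op_smult c A \<in> star_alg G S"
| comp: "A \<in> star_alg G S \<Longrightarrow> B \<in> star_alg G S \<Longrightarrow> A \<circ> B \<in> star_alg G S"
| adj: "A \<in> star_alg G S \<Longrightarrow> op_adj G A \<in> star_alg G S"

definition wot_closure :: "('v, 'e) dgraph \<Rightarrow> ('v, 'e) op set \<Rightarrow> ('v, 'e) op set" where
  "wot_closure G S = {A. bounded_op G A \<and>
     (\<forall>F. finite F \<longrightarrow> F \<subseteq> HG G \<times> HG G \<longrightarrow>
        (\<forall>\<epsilon>>0. \<exists>B\<in>S. \<forall>(f, g)\<in>F. cmod (ip (A f) g - ip (B f) g) < \<epsilon>))}"

definition WstarG :: "('v, 'e) dgraph \<Rightarrow> ('v, 'e) op set" where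
  "WstarG G = wot_closure G (star_alg G (L G ` FSG G))"

definition DG :: "('v, 'e) dgraph \<Rightarrow> ('v, 'e) op set" where
  "DG G = wot_closure G (star_alg G ((\<lambda>v. L G (Vx v)) ` UNIV))"

text \<open>Fourier coefficient p_v of a at the vertex v (coefficient of L_v).\<close>
definition vcoeff :: "('v, 'e) dgraph \<Rightarrow> ('v, 'e) op \<Rightarrow> 'v \<Rightarrow> complex" where
  "vcoeff G a v = ip (a (xi (Vx v))) (xi (Vx v))"

definition condexp :: "('v, 'e) dgraph \<Rightarrow> ('v, 'e) op \<Rightarrow> ('v, 'e) op" where
  "condexp G a = (\<lambda>f. if f \<in> HG G then
      (\<lambda>k. infsum (\<lambda>v. vcoeff G a v * L G (Vx v) f k) UNIV) else (\<lambda>k. 0))"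

primrec prod_ops :: "('v, 'e) dgraph \<Rightarrow> ('v, 'e) op list \<Rightarrow> ('v, 'e) op" where
  "prod_ops G [] = op_id G"
| "prod_ops G (a # as) = a \<circ> prod_ops G as"

definition Eprod :: "('v, 'e) dgraph \<Rightarrow> ('v, 'e) op list \<Rightarrow> ('v, 'e) op" where
  "Eprod G as = (if as = [] then op_id G else condexp G (prod_ops G as))"

text \<open>Given a list as = [a_0,...,a_{n-1}] and block indices is = [0 = i_1 < ... < i_s],
  the arguments a_{i_1} E(a_{i_1+1}...a_{i_2-1}), ..., a_{i_{s-1}} E(...), a_{i_s}.\<close>
definition blk_args :: "('v, 'e) dgraph \<Rightarrow> ('v, 'e) op list \<Rightarrow> nat list \<Rightarrow> ('v, 'e) op list" where
  "blk_args G as is = map (\<lambda>j. if j + 1 < length is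
        then (as ! (is ! j)) \<circ> Eprod G (take (is ! (j + 1) - is ! j - 1) (drop (is ! j + 1) as))
        else as ! (is ! j)) [0..<length is]"

text \<open>Speicher's operator-valued free cumulants, defined by the (recursive form of the)
  moment-cumulant formula E(a_1...a_n) = sum over pi in NC(n) of k_pi[a_1,...,a_n],
  grouping the non-crossing partitions according to the block {1 = i_1 < ... < i_s}
  containing 1.  The first argument is fuel (always = length of the list).\<close>
primrec kapf :: "('v, 'e) dgraph \<Rightarrow> nat \<Rightarrow> ('v, 'e) op list \<Rightarrow> ('v, 'e) op" where
  "kapf G 0 as = op_zero"
| "kapf G (Suc m) as =
     (if as = [] then op_zero else
      op_diff (condexp G (prod_ops G as))
        (op_sum (\<lambda>I. let is = 0 # sorted_list_of_set I in
                      kapf G m (blk_args G as is) \<circ> Eprod G (drop (last is + 1) as))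
                {I. I \<subseteq> {1..<length as} \<and> I \<noteq> {1..<length as}}))"

definition cumulant :: "('v, 'e) dgraph \<Rightarrow> ('v, 'e) op list \<Rightarrow> ('v, 'e) op" where
  "cumulant G as = kapf G (length as) as"

end

theory Submission
  imports Defs
begin

text \<open>By its Fourier expansion, x only has matrix entries from basis vectors starting at v2 to
  basis vectors starting at v1, i.e. x = L_v1 x L_v2. Elements of D_G are diagonal, so for
  d in D_G the vector d x f again lies in the range of L_v1, which x annihilates because
  v1 \<noteq> v2: every product of two or more factors d_j x is zero. The first moment E(d x)
  vanishes because x has no diagonal entries at the vertices. Finally, the moment-cumulant
  recursion turns vanishing moments into vanishing cumulants, since the arguments it feeds to
  the lower cumulants, d x E(...), are again of the form d' x.\<close>

fun fsrc :: "('v, 'e) dgraph \<Rightarrow> ('v, 'e) fsg \<Rightarrow> 'v" where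
  "fsrc G (Vx v) = v"
| "fsrc G (Pth es) = gsrc G (hd es)"

lemma fmult_Vx_eq_Some: "fmult G (Vx v) h = Some k \<longleftrightarrow> h = k \<and> fsrc G h = v"
  by (cases h) auto

lemma fmult_Pth_inj:
  assumes "fmult G (Pth es) h1 = Some k" "fmult G (Pth es) h2 = Some k" "h1 \<in> FSG G" "h2 \<in> FSG G"
  shows "h1 = h2"
  using assms by (cases h1; cases h2) (auto simp: FSG_def split: if_splits)

lemma fmult_Pth_eq_SomeD:
  assumes "fmult G (Pth es) h = Some k" and "es \<noteq> []"
  shows "fsrc G k = gsrc G (hd es)" and "fsrc G h = grng G (last es)"
  using assms by (cases h; auto split: if_splits)+

lemma paths_from_to_D:
  assumes "l \<in> paths_from_to G a b"
  obtains es where "l = Pth es" "Pth es \<in> FSG G" "es \<noteq> []" "gsrc G (hd es) = a" "grng G (last es) = b"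
  using assms by (auto simp: paths_from_to_def FSG_def)

lemma HG_iff:
  "f \<in> HG G \<longleftrightarrow> (\<forall>k. k \<notin> FSG G \<longrightarrow> f k = 0) \<and> (\<lambda>k. (cmod (f k))\<^sup>2) summable_on UNIV"
  by (simp add: HG_def l2_def)

lemma HG_outside_eq_0: "f \<in> HG G \<Longrightarrow> k \<notin> FSG G \<Longrightarrow> f k = 0"
  by (simp add: HG_iff)

lemma HG_square_summable: "f \<in> HG G \<Longrightarrow> (\<lambda>k. (cmod (f k))\<^sup>2) summable_on UNIV"
  by (simp add: HG_iff)

lemma HG_dominated:
  assumes g: "g \<in> HG G" and le: "\<And>k. cmod (f k) \<le> C * cmod (g k)"
  shows "f \<in> HG G"
proof -
  have "(\<lambda>k. C\<^sup>2 * (cmod (g k))\<^sup>2) summable_on UNIV"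
    using g by (intro summable_on_cmult_right HG_square_summable)
  moreover have "(cmod (f k))\<^sup>2 \<le> C\<^sup>2 * (cmod (g k))\<^sup>2" for k
    using power_mono[OF le norm_ge_zero, of k 2] by (simp add: power_mult_distrib)
  ultimately have "(\<lambda>k. (cmod (f k))\<^sup>2) summable_on UNIV"
    by (rule summable_on_comparison_test) simp
  moreover have "f k = 0" if "k \<notin> FSG G" for k
    using le[of k] HG_outside_eq_0[OF g that] by simp
  ultimately show ?thesis by (simp add: HG_iff)
qed

lemma HG_lincomb:
  assumes f: "f \<in> HG G" and g: "g \<in> HG G"
  shows "(\<lambda>k. c * f k + g k) \<in> HG G"
proof -
  have "(\<lambda>k. 2 * (cmod c)\<^sup>2 * (cmod (f k))\<^sup>2 + 2 * (cmod (g k))\<^sup>2) summable_on UNIV"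
    using f g by (intro summable_on_add summable_on_cmult_right HG_square_summable)
  moreover have "(cmod (c * f k + g k))\<^sup>2 \<le> 2 * (cmod c)\<^sup>2 * (cmod (f k))\<^sup>2 + 2 * (cmod (g k))\<^sup>2"
    for k
  proof -
    have "cmod (c * f k + g k) \<le> cmod c * cmod (f k) + cmod (g k)"
      by (metis norm_mult norm_triangle_ineq)
    hence "(cmod (c * f k + g k))\<^sup>2 \<le> (cmod c * cmod (f k) + cmod (g k))\<^sup>2"
      by (simp add: power_mono)
    also have "\<dots> \<le> 2 * (cmod c * cmod (f k))\<^sup>2 + 2 * (cmod (g k))\<^sup>2"
      using sum_squares_bound[of "cmod c * cmod (f k)" "cmod (g k)"] by (simp add: power2_sum)
    finally show ?thesis by (simp add: power_mult_distrib)
  qed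
  ultimately have "(\<lambda>k. (cmod (c * f k + g k))\<^sup>2) summable_on UNIV"
    by (rule summable_on_comparison_test) simp
  with f g show ?thesis by (simp add: HG_iff)
qed

lemma zero_in_HG: "(\<lambda>k. 0) \<in> HG G"
  by (simp add: HG_iff)

lemma xi_in_HG:
  assumes "g \<in> FSG G" shows "xi g \<in> HG G"
proof -
  have "(\<lambda>k. (cmod (xi g k))\<^sup>2) summable_on {g}"
    by simp
  hence "(\<lambda>k. (cmod (xi g k))\<^sup>2) summable_on UNIV"
    by (subst summable_on_cong_neutral[of "{g}" UNIV]) (auto simp: xi_def)
  with assms show ?thesis by (auto simp: HG_iff xi_def)
qed

lemma ip_xi_right: "ip f (xi h) = f h"
proof -
  have "ip f (xi h) = infsum (\<lambda>k. f k * cnj (xi h k)) {h}"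
    unfolding ip_def by (rule infsum_cong_neutral) (auto simp: xi_def)
  thus ?thesis by (simp add: xi_def)
qed

lemma ip_xi_left: "ip (xi h) f = cnj (f h)"
proof -
  have "ip (xi h) f = infsum (\<lambda>k. xi h k * cnj (f k)) {h}"
    unfolding ip_def by (rule infsum_cong_neutral) (auto simp: xi_def)
  thus ?thesis by (simp add: xi_def)
qed

lemma HG_apply_le_vnorm:
  assumes "f \<in> HG G" shows "cmod (f h) \<le> vnorm f"
proof -
  have "infsum (\<lambda>k. (cmod (f k))\<^sup>2) {h} \<le> infsum (\<lambda>k. (cmod (f k))\<^sup>2) UNIV"
    by (rule infsum_mono_neutral) (use HG_square_summable[OF assms] in auto)
  thus ?thesis unfolding vnorm_def by (simp add: real_le_rsqrt)
qed

lemma bounded_op_in_HG: "bounded_op G A \<Longrightarrow> A f \<in> HG G"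
  unfolding bounded_op_def using zero_in_HG by metis

lemma bounded_op_outside_eq_0: "bounded_op G A \<Longrightarrow> k \<notin> FSG G \<Longrightarrow> A f k = 0"
  by (rule HG_outside_eq_0[OF bounded_op_in_HG])

lemma bounded_op_lincomb:
  "bounded_op G A \<Longrightarrow> f \<in> HG G \<Longrightarrow> g \<in> HG G \<Longrightarrow>
   A (\<lambda>k. c * f k + g k) = (\<lambda>k. c * A f k + A g k)"
  unfolding bounded_op_def by blast

lemma bounded_op_zero: "bounded_op G A \<Longrightarrow> A (\<lambda>k. 0) = (\<lambda>k. 0)"
  using bounded_op_lincomb[OF _ zero_in_HG zero_in_HG, of G A "-1"] by simp

lemma bounded_op_comp_op_id:
  assumes "bounded_op G A" shows "A \<circ> op_id G = A"
proof
  fix f show "(A \<circ> op_id G) f = A f"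
    using assms bounded_op_zero[OF assms] by (simp add: op_id_def bounded_op_def)
qed

lemma bounded_op_comp_op_zero: "bounded_op G A \<Longrightarrow> A \<circ> op_zero = op_zero"
  using bounded_op_zero by (auto simp: op_zero_def)

lemma bounded_op_apply_bound:
  assumes "bounded_op G A"
  obtains K where "0 \<le> K" "\<And>f. f \<in> HG G \<Longrightarrow> cmod (A f h) \<le> K * vnorm f"
proof -
  obtain K where K: "\<And>f. f \<in> HG G \<Longrightarrow> vnorm (A f) \<le> K * vnorm f"
    using assms unfolding bounded_op_def by blast
  have "cmod (A f h) \<le> max K 0 * vnorm f" if f: "f \<in> HG G" for f
  proof -
    have "0 \<le> vnorm f" by (simp add: vnorm_def infsum_nonneg)
    hence "K * vnorm f \<le> max K 0 * vnorm f" by (simp add: mult_right_mono)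
    with HG_apply_le_vnorm[OF bounded_op_in_HG[OF assms]] K[OF f] show ?thesis
      by (meson order_trans)
  qed
  then show thesis by (rule that[rotated]) auto
qed

lemma HG_restrict: "f \<in> HG G \<Longrightarrow> (\<lambda>k. if k \<in> F then f k else 0) \<in> HG G"
  by (rule HG_dominated[of f _ _ 1]) auto

lemma HG_restrict_compl: "f \<in> HG G \<Longrightarrow> (\<lambda>k. if k \<in> F then 0 else f k) \<in> HG G"
  by (rule HG_dominated[of f _ _ 1]) auto

lemma HG_tail_small:
  assumes f: "f \<in> HG G" and "\<epsilon> > 0"
  obtains F where "finite F" "F \<subseteq> FSG G" "vnorm (\<lambda>k. if k \<in> F then 0 else f k) < \<epsilon>"
proof -
  let ?q = "\<lambda>k. (cmod (f k))\<^sup>2"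
  have sF: "?q summable_on FSG G"
    using summable_on_subset[OF HG_square_summable[OF f]] by blast
  have "\<epsilon>\<^sup>2 / 2 > 0" using \<open>\<epsilon> > 0\<close> by simp
  then obtain F where F: "finite F" "F \<subseteq> FSG G" "dist (sum ?q F) (infsum ?q (FSG G)) \<le> \<epsilon>\<^sup>2 / 2"
    using infsum_finite_approximation[OF sF] by blast
  have "infsum (\<lambda>k. (cmod (if k \<in> F then 0 else f k))\<^sup>2) UNIV = infsum ?q (FSG G - F)"
    by (rule infsum_cong_neutral) (use HG_outside_eq_0[OF f] in auto)
  also have "\<dots> = infsum ?q (FSG G) - sum ?q F"
    using infsum_Diff[OF sF _ F(2)] F(1) by simp
  also have "\<dots> < \<epsilon>\<^sup>2"
    using F(3) \<open>\<epsilon>\<^sup>2 / 2 > 0\<close> unfolding dist_real_def by linarith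
  finally have "vnorm (\<lambda>k. if k \<in> F then 0 else f k) < sqrt (\<epsilon>\<^sup>2)"
    unfolding vnorm_def by (rule real_sqrt_less_mono)
  with F(1,2) \<open>\<epsilon> > 0\<close> show thesis by (intro that) auto
qed

lemma bounded_op_restrict_finite_eq_0:
  assumes A: "bounded_op G A" and f: "f \<in> HG G" and F: "finite F" "F \<subseteq> FSG G"
    and basis: "\<And>g. g \<in> F \<Longrightarrow> f g \<noteq> 0 \<Longrightarrow> A (xi g) h = 0"
  shows "A (\<lambda>k. if k \<in> F then f k else 0) h = 0"
  using F basis
proof (induction F rule: finite_induct)
  case empty
  then show ?case using bounded_op_zero[OF A] by simp
next
  case (insert g F)
  have "(\<lambda>k. if k \<in> insert g F then f k else 0) = (\<lambda>k. f g * xi g k + (if k \<in> F then f k else 0))"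
    using insert.hyps by (auto simp: xi_def)
  moreover have "A (\<lambda>k. f g * xi g k + (if k \<in> F then f k else 0))
      = (\<lambda>k. f g * A (xi g) k + A (\<lambda>k. if k \<in> F then f k else 0) k)"
    using insert.prems by (intro bounded_op_lincomb[OF A] xi_in_HG HG_restrict[OF f]) auto
  ultimately show ?case using insert by auto
qed

text \<open>Truncate f to a finite set and use the continuity of A on the small remaining tail.\<close>
lemma bounded_op_apply_eq_0:
  assumes A: "bounded_op G A" and f: "f \<in> HG G"
    and basis: "\<And>g. g \<in> FSG G \<Longrightarrow> f g \<noteq> 0 \<Longrightarrow> A (xi g) h = 0"
  shows "A f h = 0"
proof -
  obtain K where K: "0 \<le> K" "\<And>u. u \<in> HG G \<Longrightarrow> cmod (A u h) \<le> K * vnorm u"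
    using bounded_op_apply_bound[OF A] by blast
  have "cmod (A f h) \<le> \<epsilon>" if "\<epsilon> > 0" for \<epsilon>
  proof -
    have "\<epsilon> / (K + 1) > 0" using K(1) \<open>\<epsilon> > 0\<close> by simp
    then obtain F where F: "finite F" "F \<subseteq> FSG G"
      and tail: "vnorm (\<lambda>k. if k \<in> F then 0 else f k) < \<epsilon> / (K + 1)"
      using HG_tail_small[OF f] by blast
    let ?head = "\<lambda>k. if k \<in> F then f k else 0" and ?tail = "\<lambda>k. if k \<in> F then 0 else f k"
    have "A f = A (\<lambda>k. 1 * ?head k + ?tail k)"
      by (intro arg_cong[where f = A]) auto
    also have "\<dots> = (\<lambda>k. A ?head k + A ?tail k)"
      using bounded_op_lincomb[OF A HG_restrict[OF f] HG_restrict_compl[OF f], of 1]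
      by simp
    finally have "A f h = A ?tail h"
      using bounded_op_restrict_finite_eq_0[OF A f F basis] F(2) by auto
    also have "cmod \<dots> \<le> K * vnorm ?tail"
      using K(2)[OF HG_restrict_compl[OF f]] .
    also have "\<dots> \<le> K * (\<epsilon> / (K + 1))"
      using mult_left_mono[OF less_imp_le[OF tail] K(1)] .
    also have "\<dots> \<le> \<epsilon>"
      using K(1) \<open>\<epsilon> > 0\<close> by (simp add: field_simps)
    finally show ?thesis .
  qed
  then show ?thesis
    by (metis field_le_epsilon add_0 norm_le_zero_iff)
qed

lemma op_adj_eqI:
  assumes B: "bounded_op G B" and adj: "\<And>f g. f \<in> HG G \<Longrightarrow> g \<in> HG G \<Longrightarrow> ip (A f) g = ip f (B g)"
  shows "op_adj G A = B"
proof -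
  let ?adj = "\<lambda>B. bounded_op G B \<and> (\<forall>f \<in> HG G. \<forall>g \<in> HG G. ip (A f) g = ip f (B g))"
  have "?adj (op_adj G A)"
    unfolding op_adj_def by (rule someI[of ?adj B]) (use assms in blast)
  then have B': "bounded_op G (op_adj G A)"
    and adj': "\<And>f g. f \<in> HG G \<Longrightarrow> g \<in> HG G \<Longrightarrow> ip (A f) g = ip f (op_adj G A g)"
    by auto
  have "op_adj G A g h = B g h" for g h
  proof (cases "g \<in> HG G")
    case g: True
    show ?thesis
    proof (cases "h \<in> FSG G")
      case True
      then have "ip (xi h) (op_adj G A g) = ip (xi h) (B g)"
        using adj[OF xi_in_HG g] adj'[OF xi_in_HG g] by simp
      then show ?thesis by (simp add: ip_xi_left)
    next
      case False
      then show ?thesis using bounded_op_outside_eq_0 B B' by metis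
    qed
  next
    case False
    with B B' show ?thesis
      unfolding bounded_op_def by simp
  qed
  then show ?thesis by blast
qed

section \<open>The diagonal algebra D_G\<close>

definition mult_op :: "('v, 'e) dgraph \<Rightarrow> (('v, 'e) fsg \<Rightarrow> complex) \<Rightarrow> ('v, 'e) op" where
  "mult_op G c = (\<lambda>f. if f \<in> HG G then (\<lambda>h. c h * f h) else (\<lambda>k. 0))"

definition bounded_fun :: "('a \<Rightarrow> complex) \<Rightarrow> bool" where
  "bounded_fun c \<longleftrightarrow> (\<exists>K. \<forall>h. cmod (c h) \<le> K)"

lemma bounded_fun_add: "bounded_fun c \<Longrightarrow> bounded_fun d \<Longrightarrow> bounded_fun (\<lambda>h. c h + d h)"
  unfolding bounded_fun_def by (meson add_mono norm_triangle_ineq order_trans)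

lemma bounded_fun_mult: "bounded_fun c \<Longrightarrow> bounded_fun d \<Longrightarrow> bounded_fun (\<lambda>h. c h * d h)"
  unfolding bounded_fun_def norm_mult by (meson mult_mono' norm_ge_zero)

lemma bounded_fun_const: "bounded_fun (\<lambda>h. a)"
  by (auto simp: bounded_fun_def)

lemma HG_mult:
  assumes "\<And>h. cmod (c h) \<le> K" and "f \<in> HG G"
  shows "(\<lambda>h. c h * f h) \<in> HG G"
proof (rule HG_dominated[OF assms(2)])
  show "cmod (c h * f h) \<le> K * cmod (f h)" for h
    unfolding norm_mult by (rule mult_right_mono[OF assms(1) norm_ge_zero])
qed

lemma mult_op_in_HG:
  assumes "\<And>h. cmod (c h) \<le> K"
  shows "mult_op G c f \<in> HG G"
  by (simp add: mult_op_def zero_in_HG HG_mult[of c K, OF assms])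

lemma vnorm_mult_op_le:
  assumes K: "\<And>h. cmod (c h) \<le> K" and f: "f \<in> HG G"
  shows "vnorm (mult_op G c f) \<le> K * vnorm f"
proof -
  have K0: "0 \<le> K" using K norm_ge_zero order_trans by blast
  have le: "(cmod (mult_op G c f k))\<^sup>2 \<le> K\<^sup>2 * (cmod (f k))\<^sup>2" for k
    using power_mono[OF mult_right_mono[OF K norm_ge_zero], of k "f k" 2] f
    by (simp add: mult_op_def norm_mult power_mult_distrib)
  have "infsum (\<lambda>k. (cmod (mult_op G c f k))\<^sup>2) UNIV \<le> infsum (\<lambda>k. K\<^sup>2 * (cmod (f k))\<^sup>2) UNIV"
  proof (rule infsum_mono[OF _ _ le])
    show "(\<lambda>k. (cmod (mult_op G c f k))\<^sup>2) summable_on UNIV"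
      by (rule HG_square_summable[OF mult_op_in_HG[of c K]]) (rule K)
    show "(\<lambda>k. K\<^sup>2 * (cmod (f k))\<^sup>2) summable_on UNIV"
      by (rule summable_on_cmult_right[OF HG_square_summable[OF f]])
  qed
  also have "\<dots> = K\<^sup>2 * infsum (\<lambda>k. (cmod (f k))\<^sup>2) UNIV"
    by (rule infsum_cmult_right) (rule HG_square_summable[OF f])
  finally have "vnorm (mult_op G c f) \<le> sqrt (K\<^sup>2 * infsum (\<lambda>k. (cmod (f k))\<^sup>2) UNIV)"
    unfolding vnorm_def by (rule real_sqrt_le_mono)
  then show ?thesis
    using K0 by (simp add: vnorm_def real_sqrt_mult)
qed

lemma bounded_op_mult_op:
  assumes "bounded_fun c" shows "bounded_op G (mult_op G c)"
proof -
  obtain K where K: "\<And>h. cmod (c h) \<le> K" using assms by (auto simp: bounded_fun_def)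
  have "mult_op G c (\<lambda>k. a * f k + g k) = (\<lambda>k. a * mult_op G c f k + mult_op G c g k)"
    if "f \<in> HG G" "g \<in> HG G" for f g a
    using that HG_lincomb[OF that, of a] by (auto simp: mult_op_def algebra_simps)
  moreover have "(\<lambda>h. c h * f h) \<in> HG G" if "f \<in> HG G" for f
    using HG_mult[of c K f G] K that by blast
  moreover have "\<forall>f \<in> HG G. vnorm (mult_op G c f) \<le> K * vnorm f"
    using vnorm_mult_op_le[of c K] K by blast
  ultimately show ?thesis
    unfolding bounded_op_def by (intro conjI exI[of _ K]; simp add: mult_op_def)
qed

lemma op_adj_mult_op:
  assumes "bounded_fun c" shows "op_adj G (mult_op G c) = mult_op G (\<lambda>h. cnj (c h))"
proof (rule op_adj_eqI)
  show "bounded_op G (mult_op G (\<lambda>h. cnj (c h)))"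
    using assms by (intro bounded_op_mult_op) (simp add: bounded_fun_def)
  show "ip (mult_op G c f) g = ip f (mult_op G (\<lambda>h. cnj (c h)) g)"
    if "f \<in> HG G" "g \<in> HG G" for f g
    using that by (simp add: ip_def mult_op_def mult_ac)
qed

lemma L_Vx_eq_mult_op: "L G (Vx v) = mult_op G (\<lambda>k. if fsrc G k = v then 1 else 0)"
proof -
  have "L G (Vx v) f k = (if fsrc G k = v then 1 else 0) * f k" if "f \<in> HG G" for f k
    using that HG_outside_eq_0[OF that, of k]
    by (auto simp: L_def fmult_Vx_eq_Some the_equality)
  then show ?thesis by (auto simp: L_def mult_op_def)
qed

lemma mult_op_comp_mult_op:
  assumes "bounded_fun d" shows "mult_op G c \<circ> mult_op G d = mult_op G (\<lambda>h. c h * d h)"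
proof -
  obtain K where "\<And>h. cmod (d h) \<le> K" using assms by (auto simp: bounded_fun_def)
  then show ?thesis
    by (auto simp: mult_op_def zero_in_HG mult.assoc HG_mult[of d K])
qed

lemma star_alg_vertex_eq_mult_op:
  assumes "A \<in> star_alg G (range (\<lambda>v. L G (Vx v)))"
  shows "\<exists>c. bounded_fun c \<and> A = mult_op G c"
  using assms
proof (induction rule: star_alg.induct)
  case (base A)
  then obtain v where "A = mult_op G (\<lambda>k. if fsrc G k = v then 1 else 0)"
    by (auto simp: L_Vx_eq_mult_op)
  moreover have "bounded_fun (\<lambda>k. if fsrc G k = v then 1 else 0 :: complex)"
    by (auto simp: bounded_fun_def intro!: exI[of _ 1])
  ultimately show ?case by blast
next
  case (add A B)
  then obtain c d where "bounded_fun c" "bounded_fun d" "A = mult_op G c" "B = mult_op G d"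
    by blast
  then show ?case
    by (intro exI[of _ "\<lambda>h. c h + d h"])
      (auto simp: bounded_fun_add op_add_def mult_op_def distrib_right)
next
  case (smult A a)
  then obtain c where "bounded_fun c" "A = mult_op G c" by blast
  then show ?case
    by (intro exI[of _ "\<lambda>h. a * c h"])
      (auto simp: bounded_fun_mult bounded_fun_const op_smult_def mult_op_def mult.assoc)
next
  case (comp A B)
  then obtain c d where "bounded_fun c" "bounded_fun d" "A = mult_op G c" "B = mult_op G d"
    by blast
  then show ?case
    by (intro exI[of _ "\<lambda>h. c h * d h"]) (simp add: bounded_fun_mult mult_op_comp_mult_op)
next
  case (adj A)
  then obtain c where "bounded_fun c" "A = mult_op G c" by blast
  then show ?case
    by (intro exI[of _ "\<lambda>h. cnj (c h)"]) (simp add: bounded_fun_def op_adj_mult_op)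
qed

lemma bounded_op_DG: "d \<in> DG G \<Longrightarrow> bounded_op G d"
  by (simp add: DG_def wot_closure_def)

text \<open>d is a weak-operator limit of multiplication operators.\<close>
lemma DG_apply_eq_0:
  assumes d: "d \<in> DG G" and f: "f \<in> HG G" and "f h = 0"
  shows "d f h = 0"
proof (cases "h \<in> FSG G")
  case False
  then show ?thesis by (rule bounded_op_outside_eq_0[OF bounded_op_DG[OF d]])
next
  case True
  have "cmod (d f h) < \<epsilon>" if "\<epsilon> > 0" for \<epsilon>
  proof -
    have "\<forall>F. finite F \<longrightarrow> F \<subseteq> HG G \<times> HG G \<longrightarrow> (\<forall>\<epsilon>>0.
        \<exists>B\<in>star_alg G (range (\<lambda>v. L G (Vx v))). \<forall>(f, g)\<in>F. cmod (ip (d f) g - ip (B f) g) < \<epsilon>)"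
      using d unfolding DG_def wot_closure_def by simp
    from this[rule_format, of "{(f, xi h)}" \<epsilon>]
    obtain B where B: "B \<in> star_alg G (range (\<lambda>v. L G (Vx v)))"
      and close: "cmod (ip (d f) (xi h) - ip (B f) (xi h)) < \<epsilon>"
      using f xi_in_HG[OF True] \<open>\<epsilon> > 0\<close> by auto
    obtain c where "B = mult_op G c" using star_alg_vertex_eq_mult_op[OF B] by blast
    then have "B f h = 0" using f \<open>f h = 0\<close> by (simp add: mult_op_def)
    then show ?thesis using close by (simp add: ip_xi_right)
  qed
  then show ?thesis by (metis less_irrefl zero_less_norm_iff)
qed

lemma op_zero_in_DG: "op_zero \<in> DG G"
proof -
  have "op_zero = op_smult 0 (L G (Vx v))" for v
    by (simp add: op_smult_def op_zero_def)
  then have "op_zero \<in> star_alg G (range (\<lambda>v. L G (Vx v)))"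
    by (metis rangeI star_alg.base star_alg.smult)
  moreover have "bounded_op G op_zero"
    unfolding bounded_op_def op_zero_def
    by (auto simp: zero_in_HG vnorm_def intro!: exI[of _ 0])
  ultimately show ?thesis
    unfolding DG_def wot_closure_def by (auto intro!: bexI[of _ op_zero])
qed

section \<open>Creation operators and their adjoints\<close>

lemma L_Pth_apply:
  assumes "f \<in> HG G" "h \<in> FSG G" "fmult G (Pth es) h = Some k"
  shows "L G (Pth es) f k = f h"
proof -
  have "(THE h'. h' \<in> FSG G \<and> fmult G (Pth es) h' = Some k) = h"
    using assms(2,3) fmult_Pth_inj by (intro the_equality) blast+
  with assms show ?thesis by (auto simp: L_def)
qed

lemma L_Pth_apply_eq_0:
  "(\<And>h. h \<in> FSG G \<Longrightarrow> fmult G (Pth es) h \<noteq> Some k) \<Longrightarrow> L G (Pth es) f k = 0"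
  by (auto simp: L_def)

lemma ip_L_Pth_xi:
  assumes "g \<in> FSG G"
  shows "ip (L G (Pth es) (xi g)) (xi h) = (if fmult G (Pth es) g = Some h then 1 else 0)"
proof (cases "\<exists>h'\<in>FSG G. fmult G (Pth es) h' = Some h")
  case True
  then obtain h' where h': "h' \<in> FSG G" "fmult G (Pth es) h' = Some h" by blast
  then have "fmult G (Pth es) g = Some h \<longleftrightarrow> g = h'"
    using assms fmult_Pth_inj by metis
  with h' show ?thesis
    by (simp add: ip_xi_right L_Pth_apply[OF xi_in_HG[OF assms]]) (simp add: xi_def)
next
  case False
  with assms show ?thesis by (auto simp: ip_xi_right L_Pth_apply_eq_0)
qed

definition L_adj :: "('v, 'e) dgraph \<Rightarrow> ('v, 'e) fsg \<Rightarrow> ('v, 'e) op" where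
  "L_adj G l f = (\<lambda>k. if f \<in> HG G \<and> k \<in> FSG G
      then (case fmult G l k of None \<Rightarrow> 0 | Some k' \<Rightarrow> f k') else 0)"

lemma inj_on_fmult_Pth:
  "inj_on (\<lambda>h. the (fmult G (Pth es) h)) {h \<in> FSG G. fmult G (Pth es) h \<noteq> None}"
  by (rule inj_onI) (auto intro: fmult_Pth_inj)

lemma L_adj_in_HG_vnorm_le:
  assumes f: "f \<in> HG G"
  shows "L_adj G (Pth es) f \<in> HG G" "vnorm (L_adj G (Pth es) f) \<le> 1 * vnorm f"
proof -
  define A where "A = {h \<in> FSG G. fmult G (Pth es) h \<noteq> None}"
  define \<phi> where "\<phi> h = the (fmult G (Pth es) h)" for h
  let ?q = "\<lambda>k. (cmod (f k))\<^sup>2"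
  have inj: "inj_on \<phi> A"
    unfolding A_def \<phi>_def by (rule inj_on_fmult_Pth)
  have sU: "?q summable_on UNIV" by (rule HG_square_summable[OF f])
  have s\<phi>: "?q summable_on (\<phi> ` A)" using summable_on_subset[OF sU] by blast
  have sA: "(?q \<circ> \<phi>) summable_on A" using summable_on_reindex[OF inj] s\<phi> by blast
  have "(\<lambda>k. (cmod (L_adj G (Pth es) f k))\<^sup>2) summable_on UNIV \<longleftrightarrow> (?q \<circ> \<phi>) summable_on A"
    by (rule summable_on_cong_neutral) (use f in \<open>auto simp: L_adj_def A_def \<phi>_def split: option.splits\<close>)
  with sA show "L_adj G (Pth es) f \<in> HG G"
    unfolding HG_iff by (auto simp: L_adj_def)
  have "infsum (\<lambda>k. (cmod (L_adj G (Pth es) f k))\<^sup>2) UNIV = infsum (?q \<circ> \<phi>) A"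
    by (rule infsum_cong_neutral) (use f in \<open>auto simp: L_adj_def A_def \<phi>_def split: option.splits\<close>)
  also have "\<dots> = infsum ?q (\<phi> ` A)"
    by (rule infsum_reindex[OF inj, symmetric])
  also have "\<dots> \<le> infsum ?q UNIV"
    by (rule infsum_mono_neutral[OF s\<phi> sU]) auto
  finally show "vnorm (L_adj G (Pth es) f) \<le> 1 * vnorm f"
    unfolding vnorm_def using real_sqrt_le_mono by simp
qed

lemma bounded_op_L_adj: "bounded_op G (L_adj G (Pth es))"
proof -
  have "L_adj G (Pth es) (\<lambda>k. a * f k + g k) = (\<lambda>k. a * L_adj G (Pth es) f k + L_adj G (Pth es) g k)"
    if "f \<in> HG G" "g \<in> HG G" for f g a
    using that HG_lincomb[OF that, of a] by (auto simp: L_adj_def split: option.splits)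
  moreover have "\<forall>f\<in>HG G. L_adj G (Pth es) f \<in> HG G"
    using L_adj_in_HG_vnorm_le(1) by blast
  moreover have "\<forall>f. f \<notin> HG G \<longrightarrow> L_adj G (Pth es) f = (\<lambda>k. 0)"
    by (simp add: L_adj_def)
  moreover have "\<forall>f\<in>HG G. vnorm (L_adj G (Pth es) f) \<le> 1 * vnorm f"
    using L_adj_in_HG_vnorm_le(2) by blast
  ultimately show ?thesis
    unfolding bounded_op_def by blast
qed

lemma op_adj_L_Pth: "op_adj G (L G (Pth es)) = L_adj G (Pth es)"
proof (rule op_adj_eqI[OF bounded_op_L_adj])
  fix f g assume f: "f \<in> HG G" and g: "g \<in> HG G"
  define A where "A = {h \<in> FSG G. fmult G (Pth es) h \<noteq> None}"
  define \<phi> where "\<phi> h = the (fmult G (Pth es) h)" for h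
  have inj: "inj_on \<phi> A"
    unfolding A_def \<phi>_def by (rule inj_on_fmult_Pth)
  have L_outside: "L G (Pth es) f k = 0" if "k \<notin> \<phi> ` A" for k
    using that by (intro L_Pth_apply_eq_0) (force simp: A_def \<phi>_def)
  have "ip (L G (Pth es) f) g = infsum (\<lambda>k. L G (Pth es) f k * cnj (g k)) (\<phi> ` A)"
    unfolding ip_def by (rule infsum_cong_neutral) (auto simp: L_outside)
  also have "\<dots> = infsum ((\<lambda>k. L G (Pth es) f k * cnj (g k)) \<circ> \<phi>) A"
    by (rule infsum_reindex[OF inj])
  also have "\<dots> = infsum (\<lambda>h. f h * cnj (L_adj G (Pth es) g h)) A"
    using f g by (intro infsum_cong)
      (auto simp: A_def \<phi>_def L_adj_def L_Pth_apply split: option.splits)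
  also have "\<dots> = ip f (L_adj G (Pth es) g)"
    unfolding ip_def by (rule infsum_cong_neutral) (auto simp: L_adj_def A_def split: option.splits)
  finally show "ip (L G (Pth es) f) g = ip f (L_adj G (Pth es) g)" .
qed

lemma ip_op_adj_L_Pth_xi:
  assumes "g \<in> FSG G" "h \<in> FSG G"
  shows "ip (op_adj G (L G (Pth es)) (xi g)) (xi h) = (if fmult G (Pth es) h = Some g then 1 else 0)"
  unfolding op_adj_L_Pth ip_xi_right using assms xi_in_HG[OF assms(1)]
  by (auto simp: L_adj_def xi_def split: option.splits)

lemma fsrc_if_ip_L_xi_neq_0:
  assumes "l \<in> paths_from_to G u w" "g \<in> FSG G" "ip (L G l (xi g)) (xi h) \<noteq> 0"
  shows "fsrc G h = u \<and> fsrc G g = w"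
proof -
  obtain es where es: "l = Pth es" "Pth es \<in> FSG G" "es \<noteq> []"
      "gsrc G (hd es) = u" "grng G (last es) = w"
    using assms(1) by (rule paths_from_to_D)
  have "fmult G (Pth es) g = Some h"
    using assms(3) es(1) ip_L_Pth_xi[OF assms(2)] by (auto split: if_splits)
  then show ?thesis
    using fmult_Pth_eq_SomeD[OF _ es(3)] es(4,5) by metis
qed

lemma fsrc_if_ip_op_adj_L_xi_neq_0:
  assumes "l \<in> paths_from_to G w u" "g \<in> FSG G" "h \<in> FSG G"
    and "ip (op_adj G (L G l) (xi g)) (xi h) \<noteq> 0"
  shows "fsrc G h = u \<and> fsrc G g = w"
proof -
  obtain es where es: "l = Pth es" "Pth es \<in> FSG G" "es \<noteq> []"
      "gsrc G (hd es) = w" "grng G (last es) = u"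
    using assms(1) by (rule paths_from_to_D)
  have "fmult G (Pth es) h = Some g"
    using assms(4) es(1) ip_op_adj_L_Pth_xi[OF assms(2,3)] by (auto split: if_splits)
  then show ?thesis
    using fmult_Pth_eq_SomeD[OF _ es(3)] es(4,5) by metis
qed

section \<open>Corner operators\<close>

text \<open>In the paper's notation, corner G u w x says x = L_u x L_w.\<close>
definition corner :: "('v, 'e) dgraph \<Rightarrow> 'v \<Rightarrow> 'v \<Rightarrow> ('v, 'e) op \<Rightarrow> bool" where
  "corner G u w x \<longleftrightarrow> bounded_op G x \<and>
     (\<forall>g \<in> FSG G. \<forall>h. x (xi g) h \<noteq> 0 \<longrightarrow> fsrc G h = u \<and> fsrc G g = w)"

lemma corner_bounded_op: "corner G u w x \<Longrightarrow> bounded_op G x"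
  by (simp add: corner_def)

lemma infsum_neq_0_imp_ex: "infsum f A \<noteq> 0 \<Longrightarrow> \<exists>x\<in>A. f x \<noteq> 0"
  by (metis infsum_0)

lemma corner_if_fourier_expansion:
  assumes x: "bounded_op G x"
    and fourier: "\<forall>g \<in> FSG G. \<forall>h \<in> FSG G.
           ip (x (xi g)) (xi h) =
             infsum (\<lambda>l. p1 l * ip (L G l (xi g)) (xi h)) (paths_from_to G u w)
           + infsum (\<lambda>l. p2 l * ip (op_adj G (L G l) (xi g)) (xi h)) (paths_from_to G w u)"
  shows "corner G u w x"
  unfolding corner_def
proof (rule conjI[OF x], intro ballI allI impI)
  fix g h assume g: "g \<in> FSG G" and nz: "x (xi g) h \<noteq> 0"
  then have h: "h \<in> FSG G" using bounded_op_outside_eq_0[OF x] by blast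
  let ?creation = "infsum (\<lambda>l. p1 l * ip (L G l (xi g)) (xi h)) (paths_from_to G u w)"
  let ?annihilation = "infsum (\<lambda>l. p2 l * ip (op_adj G (L G l) (xi g)) (xi h)) (paths_from_to G w u)"
  have "x (xi g) h = ?creation + ?annihilation"
    using fourier[rule_format, OF g h] by (simp only: ip_xi_right)
  with nz consider "?creation \<noteq> 0" | "?annihilation \<noteq> 0" by force
  then show "fsrc G h = u \<and> fsrc G g = w"
  proof cases
    case 1
    then obtain l where "l \<in> paths_from_to G u w" "ip (L G l (xi g)) (xi h) \<noteq> 0"
      by (auto dest: infsum_neq_0_imp_ex)
    then show ?thesis by (intro fsrc_if_ip_L_xi_neq_0 g)
  next
    case 2
    then obtain l where "l \<in> paths_from_to G w u" "ip (op_adj G (L G l) (xi g)) (xi h) \<noteq> 0"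
      by (auto dest: infsum_neq_0_imp_ex)
    then show ?thesis by (intro fsrc_if_ip_op_adj_L_xi_neq_0 g h)
  qed
qed

lemma corner_apply_eq_0_range:
  assumes x: "corner G u w x" and "fsrc G h \<noteq> u"
  shows "x f h = 0"
proof (cases "f \<in> HG G")
  case True
  with assms show ?thesis
    unfolding corner_def by (blast intro: bounded_op_apply_eq_0)
next
  case False
  with corner_bounded_op[OF x] show ?thesis by (simp add: bounded_op_def)
qed

lemma corner_apply_eq_0_domain:
  assumes "corner G u w x" and "f \<in> HG G" and "\<And>g. fsrc G g = w \<Longrightarrow> f g = 0"
  shows "x f h = 0"
  using assms unfolding corner_def by (blast intro: bounded_op_apply_eq_0)

lemma corner_DG_corner_eq_0:
  assumes x: "corner G u w x" and "u \<noteq> w" and d: "d \<in> DG G"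
  shows "x (d (x f)) = (\<lambda>k. 0)"
proof
  fix h
  have "x f \<in> HG G" by (rule bounded_op_in_HG[OF corner_bounded_op[OF x]])
  then have "d (x f) g = 0" if "fsrc G g = w" for g
    using that \<open>u \<noteq> w\<close> by (intro DG_apply_eq_0[OF d] corner_apply_eq_0_range[OF x]) auto
  then show "x (d (x f)) h = 0"
    by (intro corner_apply_eq_0_domain[OF x] bounded_op_in_HG bounded_op_DG[OF d])
qed

lemma corner_vertex_diagonal_eq_0:
  assumes "corner G u w x" and "u \<noteq> w"
  shows "x (xi (Vx v)) (Vx v) = 0"
proof -
  have "Vx v \<in> FSG G" by (simp add: FSG_def)
  with assms show ?thesis unfolding corner_def by (metis fsrc.simps(1))
qed

section \<open>Moments and cumulants\<close>

lemma prod_ops_DG_corner_eq_zero: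
  assumes x: "corner G u w x" and "u \<noteq> w" and "d1 \<in> DG G" "d2 \<in> DG G"
  shows "prod_ops G ((d1 \<circ> x) # (d2 \<circ> x) # as) = op_zero"
proof
  fix f
  have "x (d2 (x (prod_ops G as f))) = (\<lambda>k. 0)"
    by (rule corner_DG_corner_eq_0[OF assms(1,2,4)])
  then show "prod_ops G ((d1 \<circ> x) # (d2 \<circ> x) # as) f = op_zero f"
    using bounded_op_zero[OF bounded_op_DG[OF assms(3)]] by (simp add: op_zero_def)
qed

lemma condexp_op_zero: "condexp G op_zero = op_zero"
  by (auto simp: condexp_def vcoeff_def op_zero_def ip_def)

lemma condexp_DG_corner_eq_zero:
  assumes x: "corner G u w x" and "u \<noteq> w" and d: "d \<in> DG G"
  shows "condexp G (prod_ops G [d \<circ> x]) = op_zero"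
proof -
  have "vcoeff G (prod_ops G [d \<circ> x]) v = 0" for v
  proof -
    have "xi (Vx v) \<in> HG G" by (simp add: xi_in_HG FSG_def)
    moreover have "d (x (xi (Vx v))) (Vx v) = 0"
      using x corner_vertex_diagonal_eq_0[OF assms(1,2)]
      by (intro DG_apply_eq_0[OF d] bounded_op_in_HG[OF corner_bounded_op[OF x]])
    ultimately show ?thesis by (simp add: vcoeff_def ip_xi_right op_id_def)
  qed
  then show ?thesis by (auto simp: condexp_def op_zero_def)
qed

lemma condexp_prod_DG_corner_eq_zero:
  assumes x: "corner G u w x" and "u \<noteq> w"
    and "set as \<subseteq> (\<lambda>d. d \<circ> x) ` DG G" and "as \<noteq> []"
  shows "condexp G (prod_ops G as) = op_zero"
proof -
  consider d where "d \<in> DG G" "as = [d \<circ> x]"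
    | d1 d2 bs where "d1 \<in> DG G" "d2 \<in> DG G" "as = (d1 \<circ> x) # (d2 \<circ> x) # bs"
    using assms(3,4) by (cases as rule: remdups_adj.cases) auto
  then show ?thesis
  proof cases
    case 1
    then show ?thesis using condexp_DG_corner_eq_zero[OF x \<open>u \<noteq> w\<close>] by simp
  next
    case 2
    then show ?thesis using prod_ops_DG_corner_eq_zero[OF x \<open>u \<noteq> w\<close>] condexp_op_zero by simp
  qed
qed

lemma DG_corner_comp_Eprod:
  assumes x: "corner G u w x" and "u \<noteq> w" and d: "d \<in> DG G"
    and bs: "set bs \<subseteq> (\<lambda>d. d \<circ> x) ` DG G"
  shows "d \<circ> x \<circ> Eprod G bs \<in> (\<lambda>d. d \<circ> x) ` DG G"
proof (cases "bs = []")
  case True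
  have "d \<circ> x \<circ> op_id G = d \<circ> x"
    by (simp add: bounded_op_comp_op_id[OF corner_bounded_op[OF x]] comp_assoc)
  with True d show ?thesis by (simp add: Eprod_def)
next
  case False
  have "d \<circ> x \<circ> op_zero = op_zero"
    by (simp add: comp_assoc bounded_op_comp_op_zero[OF corner_bounded_op[OF x]]
        bounded_op_comp_op_zero[OF bounded_op_DG[OF d]])
  also have "\<dots> = op_zero \<circ> x"
    by (simp add: op_zero_def comp_def)
  finally show ?thesis
    using False image_eqI[of _ "\<lambda>d. d \<circ> x", OF refl op_zero_in_DG]
    by (simp add: Eprod_def condexp_prod_DG_corner_eq_zero[OF x \<open>u \<noteq> w\<close> bs])
qed

lemma set_blk_args_subset:
  assumes closed: "\<And>a bs. a \<in> C \<Longrightarrow> set bs \<subseteq> C \<Longrightarrow> a \<circ> Eprod G bs \<in> C"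
    and as: "set as \<subseteq> C" "as \<noteq> []" and I: "I \<subseteq> {1..<length as}"
  shows "set (blk_args G as (0 # sorted_list_of_set I)) \<subseteq> C"
proof -
  let ?is = "0 # sorted_list_of_set I"
  have "finite I" using I finite_subset by blast
  then have "i < length as" if "i \<in> set ?is" for i
    using that I as(2) by auto
  then have "as ! (?is ! j) \<in> C" if "j < length ?is" for j
    using nth_mem[OF that] as(1) nth_mem by blast
  moreover have "set (take n (drop m as)) \<subseteq> C" for n m
    using as by (meson in_set_dropD in_set_takeD subset_iff)
  ultimately show ?thesis
    unfolding blk_args_def by (auto intro!: closed)
qed

lemma kapf_eq_zero_if_moments_eq_zero:
  assumes moments: "\<And>as. set as \<subseteq> C \<Longrightarrow> as \<noteq> [] \<Longrightarrow> condexp G (prod_ops G as) = op_zero"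
    and closed: "\<And>a bs. a \<in> C \<Longrightarrow> set bs \<subseteq> C \<Longrightarrow> a \<circ> Eprod G bs \<in> C"
    and "set as \<subseteq> C"
  shows "kapf G m as = op_zero"
  using \<open>set as \<subseteq> C\<close>
proof (induction m arbitrary: as)
  case 0
  then show ?case by simp
next
  case (Suc m)
  show ?case
  proof (cases "as = []")
    case False
    have "kapf G m (blk_args G as (0 # sorted_list_of_set I)) = op_zero"
      if "I \<subseteq> {1..<length as}" for I
      by (rule Suc.IH[OF set_blk_args_subset[OF closed Suc.prems False that]])
    then show ?thesis
      using False moments[OF Suc.prems False]
      by (simp add: op_diff_def op_sum_def op_zero_def Let_def)
  qed simp
qed

theorem mainTheorem2:
  fixes G :: "('v::countable, 'e::countable) dgraph"
    and v1 v2 :: 'v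
    and x :: "('v, 'e) op"
    and p1 p2 :: "('v, 'e) fsg \<Rightarrow> complex"
    and n :: nat
    and ds :: "('v, 'e) op list"
  assumes "v1 \<noteq> v2"
    and "x \<in> WstarG G"
    and "\<forall>g \<in> FSG G. \<forall>h \<in> FSG G.
           ip (x (xi g)) (xi h) =
             infsum (\<lambda>l. p1 l * ip (L G l (xi g)) (xi h)) (paths_from_to G v1 v2)
           + infsum (\<lambda>l. p2 l * ip (op_adj G (L G l) (xi g)) (xi h)) (paths_from_to G v2 v1)"
    and "n \<ge> 1"
    and "length ds = n"
    and "set ds \<subseteq> DG G"
  shows "condexp G (prod_ops G (map (\<lambda>d. d \<circ> x) ds)) = op_zero
       \<and> cumulant G (map (\<lambda>d. d \<circ> x) ds) = op_zero"
proof -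
  let ?C = "(\<lambda>d. d \<circ> x) ` DG G"
  have "bounded_op G x" using assms(2) by (simp add: WstarG_def wot_closure_def)
  then have x: "corner G v1 v2 x" using assms(3) by (rule corner_if_fourier_expansion)
  note moments = condexp_prod_DG_corner_eq_zero[OF x \<open>v1 \<noteq> v2\<close>]
  have "a \<circ> Eprod G bs \<in> ?C" if "a \<in> ?C" "set bs \<subseteq> ?C" for a bs
    using that DG_corner_comp_Eprod[OF x \<open>v1 \<noteq> v2\<close>] by blast
  then have "kapf G m (map (\<lambda>d. d \<circ> x) ds) = op_zero" for m
    using assms(6) by (intro kapf_eq_zero_if_moments_eq_zero[OF moments]) auto
  moreover have "condexp G (prod_ops G (map (\<lambda>d. d \<circ> x) ds)) = op_zero"
    using assms(4-6) by (intro moments) auto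
  ultimately show ?thesis by (simp add: cumulant_def)
qed

end
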